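(* Let $\mathcal{W}\subset\mathbb{R}^2$ be open with conformal metric $g=\lambda(x,y)(dx^2+dy^2)$, $\lambda>0$, and let $f:\mathbb{R}\to(0,\infty)$ be smooth. A graph $z=z(x,y)$ in $\mathcal{W}\times_f\mathbb{R}$ (metric $f(z)g+dz^2$), oriented by the upward unit normal, has extrinsic curvature $K_{\rm ext}$ if and only if $z$ satisfies $Ar+2Bs+Ct+rt-s^2=E$, where $p=z_x,q=z_y,r=z_{xx},s=z_{xy},t=z_{yy}$ and $A=\frac{p\lambda_x}{2\lambda}-\frac{q\lambda_y}{2\lambda}-\frac{q^2f'}{f}-\frac{f'}{2}\lambda$, $B=\frac{p\lambda_y}{2\lambda}+\frac{q\lambda_x}{2\lambda}+\frac{pqf'}{f}$, $C=-\frac{p\lambda_x}{2\lambda}+\frac{q\lambda_y}{2\lambda}-\frac{p^2f'}{f}-\frac{f'}{2}\lambda$, $E=K_{\rm ext}(f\lambda+p^2+q^2)^2-AC+B^2$, with $f,f'$ evaluated at $z$ and $\lambda$ at $(x,y)$. In particular $AC-B^2+E=K_{\rm ext}(f\lambda+p^2+q^2)^2$, so the equation is elliptic when $K_{\rm ext}>0$.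
   Context: Extrinsic curvature $K_{\rm ext}=\det(II)/\det(I)$ for the graph in the warped product Riemannian 3-manifold. *)

theory Defs
  imports "HOL-Analysis.Analysis"
begin

definition pd :: "('a::real_normed_vector \<Rightarrow> 'b::real_normed_vector) \<Rightarrow> 'a \<Rightarrow> 'a \<Rightarrow> 'b" where
  "pd F u v = vector_derivative (\<lambda>h. F (u + h *\<^sub>R v)) (at 0)"

text \<open>Iterated partial derivatives along a list of directions (innermost = last).\<close>
fun iter_pd :: "'a::real_normed_vector list \<Rightarrow> ('a \<Rightarrow> 'b::real_normed_vector) \<Rightarrow> 'a \<Rightarrow> 'b" where
  "iter_pd [] F = F"
| "iter_pd (v # vs) F = (\<lambda>u. pd (iter_pd vs F) u v)"

definition Ck_on :: "nat \<Rightarrow> 'a::euclidean_space set \<Rightarrow> ('a \<Rightarrow> 'b::real_normed_vector) \<Rightarrow> bool" where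
  "Ck_on k S F \<longleftrightarrow>
     (\<forall>vs. set vs \<subseteq> Basis \<and> length vs \<le> k \<longrightarrow> continuous_on S (iter_pd vs F)) \<and>
     (\<forall>vs. set vs \<subseteq> Basis \<and> length vs < k \<longrightarrow>
        (\<forall>v\<in>Basis. \<forall>u\<in>S. ((\<lambda>h. iter_pd vs F (u + h *\<^sub>R v)) has_vector_derivative iter_pd (v # vs) F u) (at 0)))"

definition smooth_on :: "'a::euclidean_space set \<Rightarrow> ('a \<Rightarrow> 'b::real_normed_vector) \<Rightarrow> bool" where
  "smooth_on S F \<longleftrightarrow> (\<forall>k. Ck_on k S F)"

text \<open>A Riemannian metric on (an open set of) R^3 in coordinates: u \<mapsto> matrix (g_ij(u)).\<close>
definition metric_inner :: "real^3^3 \<Rightarrow> real^3 \<Rightarrow> real^3 \<Rightarrow> real" where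
  "metric_inner M a b = a \<bullet> (M *v b)"

text \<open>Christoffel symbols of the Levi-Civita connection: christoffel G u k i j = Gamma^k_ij(u).\<close>
definition christoffel :: "(real^3 \<Rightarrow> real^3^3) \<Rightarrow> real^3 \<Rightarrow> 3 \<Rightarrow> 3 \<Rightarrow> 3 \<Rightarrow> real" where
  "christoffel G u k i j = (1/2) * (\<Sum>l\<in>UNIV. matrix_inv (G u) $ k $ l *
      (pd (\<lambda>v. G v $ j $ l) u (axis i 1) + pd (\<lambda>v. G v $ i $ l) u (axis j 1)
       - pd (\<lambda>v. G v $ i $ j) u (axis l 1)))"

definition covd_tangent :: "(real^3 \<Rightarrow> real^3^3) \<Rightarrow> (real^2 \<Rightarrow> real^3) \<Rightarrow> real^2 \<Rightarrow> 2 \<Rightarrow> 2 \<Rightarrow> real^3" where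
  "covd_tangent G X w i j =
     pd (\<lambda>w'. pd X w' (axis j 1)) w (axis i 1)
     + (\<chi> k. \<Sum>a\<in>UNIV. \<Sum>b\<in>UNIV. christoffel G (X w) k a b * (pd X w (axis i 1) $ a) * (pd X w (axis j 1) $ b))"

definition upward_normal :: "(real^3 \<Rightarrow> real^3^3) \<Rightarrow> (real^2 \<Rightarrow> real^3) \<Rightarrow> real^2 \<Rightarrow> real^3" where
  "upward_normal G X w = (THE N.
      metric_inner (G (X w)) N (pd X w (axis 1 1)) = 0 \<and>
      metric_inner (G (X w)) N (pd X w (axis 2 1)) = 0 \<and>
      metric_inner (G (X w)) N N = 1 \<and> N $ 3 > 0)"

definition first_ff :: "(real^3 \<Rightarrow> real^3^3) \<Rightarrow> (real^2 \<Rightarrow> real^3) \<Rightarrow> real^2 \<Rightarrow> real^2^2" where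
  "first_ff G X w = (\<chi> i j. metric_inner (G (X w)) (pd X w (axis i 1)) (pd X w (axis j 1)))"

definition second_ff :: "(real^3 \<Rightarrow> real^3^3) \<Rightarrow> (real^2 \<Rightarrow> real^3) \<Rightarrow> real^2 \<Rightarrow> real^2^2" where
  "second_ff G X w = (\<chi> i j. metric_inner (G (X w)) (covd_tangent G X w i j) (upward_normal G X w))"

definition extrinsic_curvature :: "(real^3 \<Rightarrow> real^3^3) \<Rightarrow> (real^2 \<Rightarrow> real^3) \<Rightarrow> real^2 \<Rightarrow> real" where
  "extrinsic_curvature G X w = det (second_ff G X w) / det (first_ff G X w)"

definition warped_metric :: "(real^2 \<Rightarrow> real) \<Rightarrow> (real \<Rightarrow> real) \<Rightarrow> real^3 \<Rightarrow> real^3^3" where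
  "warped_metric lam f u = (\<chi> i j. if i = j then (if i = 3 then 1 else f (u $ 3) * lam (vector [u $ 1, u $ 2])) else 0)"

definition graph_map :: "(real^2 \<Rightarrow> real) \<Rightarrow> real^2 \<Rightarrow> real^3" where
  "graph_map z w = vector [w $ 1, w $ 2, z w]"

end

theory Submission
  imports Defs
begin

text \<open>
  The graph \<open>X(x,y) = (x, y, z(x,y))\<close> has tangent vectors \<open>(1,0,p)\<close>, \<open>(0,1,q)\<close> and second
  derivatives \<open>(0,0,r)\<close>, \<open>(0,0,s)\<close>, \<open>(0,0,t)\<close>, and at \<open>X\<close> the warped metric is
  \<open>diag(f\<lambda>, f\<lambda>, 1)\<close>. Hence \<open>det I = f\<lambda> (f\<lambda> + p\<^sup>2 + q\<^sup>2)\<close>, the upward unit normal is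
  \<open>(-p, -q, f\<lambda>) / (f\<lambda> c)\<close> with \<open>c\<^sup>2 = (f\<lambda> + p\<^sup>2 + q\<^sup>2) / (f\<lambda>)\<close>, and since the only
  nonzero derivatives of the metric are \<open>f \<lambda>\<^sub>x\<close>, \<open>f \<lambda>\<^sub>y\<close>, \<open>f' \<lambda>\<close>, the Christoffel symbols
  give \<open>II = [[r + C, s - B], [s - B, t + A]] / c\<close>; symmetry of \<open>II\<close> is Schwarz's theorem
  \<open>z\<^sub>x\<^sub>y = z\<^sub>y\<^sub>x\<close>. Thus \<open>K\<^sub>e\<^sub>x\<^sub>t = ((r + C)(t + A) - (s - B)\<^sup>2) / (f\<lambda> + p\<^sup>2 + q\<^sup>2)\<^sup>2\<close>, and clearing
  the positive denominator gives the equation.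
\<close>

lemma vector3_eq_axis_sum:
  "(vector [x, y, t] :: real^3) = x *\<^sub>R axis 1 1 + y *\<^sub>R axis 2 1 + t *\<^sub>R axis 3 1"
  by (simp add: vec_eq_iff forall_3 axis_def)

lemma has_vector_derivative_vector3:
  assumes "(f1 has_real_derivative a) (at x within S)" "(f2 has_real_derivative b) (at x within S)"
    "(f3 has_real_derivative c) (at x within S)"
  shows "((\<lambda>h. vector [f1 h, f2 h, f3 h] :: real^3) has_vector_derivative vector [a, b, c]) (at x within S)"
  unfolding vector3_eq_axis_sum
  using assms by (auto intro!: derivative_eq_intros)

lemma has_real_derivative_line_component:
  "((\<lambda>h. (u + h *\<^sub>R v) $ k) has_real_derivative v $ k) (at x within S)"
  by (auto intro!: derivative_eq_intros)

lemma has_real_derivative_along_line: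
  fixes g :: "'a::real_normed_vector \<Rightarrow> real"
  assumes "((\<lambda>t. g ((c + x *\<^sub>R v) + t *\<^sub>R v)) has_real_derivative D) (at 0)"
  shows "((\<lambda>s. g (c + s *\<^sub>R v)) has_real_derivative D) (at x)"
proof -
  have "(\<lambda>t. g ((c + x *\<^sub>R v) + t *\<^sub>R v)) = (\<lambda>t. g (c + (t + x) *\<^sub>R v))"
    by (simp add: algebra_simps)
  then show ?thesis
    using assms DERIV_shift[of "\<lambda>s. g (c + s *\<^sub>R v)" D 0 x] by simp
qed

lemma Ck_on_has_real_derivative_iter_pd:
  fixes F :: "'a::euclidean_space \<Rightarrow> real"
  assumes "Ck_on k S F" "set vs \<subseteq> Basis" "length vs < k" "v \<in> Basis" "u \<in> S"
  shows "((\<lambda>h. iter_pd vs F (u + h *\<^sub>R v)) has_real_derivative iter_pd (v # vs) F u) (at 0)"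
  using assms unfolding Ck_on_def has_real_derivative_iff_has_vector_derivative by blast

lemma Ck_on_continuous_on_iter_pd:
  "Ck_on k S F \<Longrightarrow> set vs \<subseteq> Basis \<Longrightarrow> length vs \<le> k \<Longrightarrow> continuous_on S (iter_pd vs F)"
  by (simp add: Ck_on_def)

lemma smooth_on_UNIV_has_real_derivative:
  fixes f :: "real \<Rightarrow> real"
  assumes "smooth_on UNIV f"
  shows "(f has_real_derivative deriv f x) (at x)"
proof -
  have "((\<lambda>h. f (x + h)) has_real_derivative pd f x 1) (at 0)"
    using Ck_on_has_real_derivative_iter_pd[of 1 UNIV f "[]" 1 x] assms by (simp add: smooth_on_def)
  then have "(f has_real_derivative pd f x 1) (at x)"
    using DERIV_shift[of f "pd f x 1" 0 x] by (simp add: add.commute)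
  then show ?thesis
    by (simp add: DERIV_imp_deriv)
qed

lemma mixed_difference_mean_value:
  fixes z Zx Zxy :: "'a::real_normed_vector \<Rightarrow> real"
  assumes h: "h > 0"
    and zx: "\<And>x y. 0 \<le> x \<Longrightarrow> x \<le> h \<Longrightarrow> 0 \<le> y \<Longrightarrow> y \<le> h \<Longrightarrow>
      ((\<lambda>t. z ((w + x *\<^sub>R a + y *\<^sub>R b) + t *\<^sub>R a)) has_real_derivative Zx (w + x *\<^sub>R a + y *\<^sub>R b)) (at 0)"
    and zxy: "\<And>x y. 0 \<le> x \<Longrightarrow> x \<le> h \<Longrightarrow> 0 \<le> y \<Longrightarrow> y \<le> h \<Longrightarrow>
      ((\<lambda>t. Zx ((w + x *\<^sub>R a + y *\<^sub>R b) + t *\<^sub>R b)) has_real_derivative Zxy (w + x *\<^sub>R a + y *\<^sub>R b)) (at 0)"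
  obtains \<xi> \<eta> where "0 < \<xi>" "\<xi> < h" "0 < \<eta>" "\<eta> < h"
    "z (w + h *\<^sub>R a + h *\<^sub>R b) - z (w + h *\<^sub>R a) - z (w + h *\<^sub>R b) + z w
       = h * h * Zxy (w + \<xi> *\<^sub>R a + \<eta> *\<^sub>R b)"
proof -
  let ?\<phi> = "\<lambda>x. z (w + h *\<^sub>R b + x *\<^sub>R a) - z (w + x *\<^sub>R a)"
  have "(?\<phi> has_real_derivative Zx (w + x *\<^sub>R a + h *\<^sub>R b) - Zx (w + x *\<^sub>R a)) (at x)"
    if "0 \<le> x" "x \<le> h" for x
  proof (intro DERIV_diff; rule has_real_derivative_along_line)
    show "((\<lambda>t. z (w + h *\<^sub>R b + x *\<^sub>R a + t *\<^sub>R a)) has_real_derivative Zx (w + x *\<^sub>R a + h *\<^sub>R b)) (at 0)"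
      using zx[OF that, of h] h by (simp add: add_ac)
    show "((\<lambda>t. z (w + x *\<^sub>R a + t *\<^sub>R a)) has_real_derivative Zx (w + x *\<^sub>R a)) (at 0)"
      using zx[OF that, of 0] h by simp
  qed
  from MVT2[OF h this] obtain \<xi> where \<xi>: "0 < \<xi>" "\<xi> < h"
    "?\<phi> h - ?\<phi> 0 = (h - 0) * (Zx (w + \<xi> *\<^sub>R a + h *\<^sub>R b) - Zx (w + \<xi> *\<^sub>R a))"
    by blast
  have "((\<lambda>y. Zx (w + \<xi> *\<^sub>R a + y *\<^sub>R b)) has_real_derivative Zxy (w + \<xi> *\<^sub>R a + y *\<^sub>R b)) (at y)"
    if "0 \<le> y" "y \<le> h" for y
    using \<xi> that by (intro has_real_derivative_along_line[OF zxy]) auto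
  from MVT2[OF h this] obtain \<eta> where \<eta>: "0 < \<eta>" "\<eta> < h"
    "Zx (w + \<xi> *\<^sub>R a + h *\<^sub>R b) - Zx (w + \<xi> *\<^sub>R a + 0 *\<^sub>R b)
       = (h - 0) * Zxy (w + \<xi> *\<^sub>R a + \<eta> *\<^sub>R b)"
    by blast
  show ?thesis
    using that[OF \<xi>(1,2) \<eta>(1,2)] \<xi>(3) \<eta>(3) by (simp add: algebra_simps)
qed

lemma partial_derivatives_commute:
  fixes z Zx Zy Zxy Zyx :: "'a::real_normed_vector \<Rightarrow> real"
  assumes W: "open W" and w: "w \<in> W"
    and zx: "\<And>u. u \<in> W \<Longrightarrow> ((\<lambda>t. z (u + t *\<^sub>R a)) has_real_derivative Zx u) (at 0)"
    and zy: "\<And>u. u \<in> W \<Longrightarrow> ((\<lambda>t. z (u + t *\<^sub>R b)) has_real_derivative Zy u) (at 0)"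
    and zxy: "\<And>u. u \<in> W \<Longrightarrow> ((\<lambda>t. Zx (u + t *\<^sub>R b)) has_real_derivative Zxy u) (at 0)"
    and zyx: "\<And>u. u \<in> W \<Longrightarrow> ((\<lambda>t. Zy (u + t *\<^sub>R a)) has_real_derivative Zyx u) (at 0)"
    and cont: "continuous_on W Zxy" "continuous_on W Zyx"
  shows "Zxy w = Zyx w"
proof (rule ccontr)
  \<comment> \<open>The mixed second difference over a small square is \<open>h\<^sup>2 Zxy\<close> at one point and \<open>h\<^sup>2 Zyx\<close>
    at another, both within \<open>e\<close> of their values at \<open>w\<close>.\<close>
  assume "Zxy w \<noteq> Zyx w"
  define e where "e = \<bar>Zxy w - Zyx w\<bar> / 2"
  have e: "e > 0" using \<open>Zxy w \<noteq> Zyx w\<close> by (simp add: e_def)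
  obtain d1 where d1: "d1 > 0" "ball w d1 \<subseteq> W" using W w open_contains_ball by blast
  obtain d2 where d2: "d2 > 0" "\<And>u. dist u w < d2 \<Longrightarrow> dist (Zxy u) (Zxy w) < e"
    using cont(1) W w e by (metis continuous_on_eq_continuous_at continuous_at_eps_delta)
  obtain d3 where d3: "d3 > 0" "\<And>u. dist u w < d3 \<Longrightarrow> dist (Zyx u) (Zyx w) < e"
    using cont(2) W w e by (metis continuous_on_eq_continuous_at continuous_at_eps_delta)
  define d where "d = min d1 (min d2 d3)"
  define N where "N = norm a + norm b + 1"
  define h where "h = d / 2 / N"
  have d: "d > 0" using d1 d2 d3 by (simp add: d_def)
  have N: "N > 0" by (simp add: N_def add_nonneg_pos)
  have h: "h > 0" using d N by (simp add: h_def)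
  have near: "dist (w + x *\<^sub>R a + y *\<^sub>R b) w < d" if "0 \<le> x" "x \<le> h" "0 \<le> y" "y \<le> h" for x y
  proof -
    have "dist (w + x *\<^sub>R a + y *\<^sub>R b) w \<le> x * norm a + y * norm b"
      using that norm_triangle_ineq[of "x *\<^sub>R a" "y *\<^sub>R b"] by (simp add: dist_norm)
    also have "\<dots> \<le> h * N"
      using that by (simp add: N_def distrib_left add_mono mult_right_mono add_increasing2)
    also have "\<dots> = d / 2" using N by (simp add: h_def)
    also have "\<dots> < d" using d by simp
    finally show ?thesis .
  qed
  then have inW: "w + x *\<^sub>R a + y *\<^sub>R b \<in> W" if "0 \<le> x" "x \<le> h" "0 \<le> y" "y \<le> h" for x y
    using that d1 by (force simp: d_def dist_commute)
  have inW': "w + x *\<^sub>R b + y *\<^sub>R a \<in> W" if "0 \<le> x" "x \<le> h" "0 \<le> y" "y \<le> h" for x y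
    using inW[OF that(3,4,1,2)] by (simp add: add_ac)
  obtain \<xi> \<eta> where \<xi>\<eta>: "0 < \<xi>" "\<xi> < h" "0 < \<eta>" "\<eta> < h"
    "z (w + h *\<^sub>R a + h *\<^sub>R b) - z (w + h *\<^sub>R a) - z (w + h *\<^sub>R b) + z w
       = h * h * Zxy (w + \<xi> *\<^sub>R a + \<eta> *\<^sub>R b)"
    by (rule mixed_difference_mean_value[where z = z and Zx = Zx and Zxy = Zxy and w = w and a = a and b = b,
          OF h])
      (use inW zx zxy in auto)
  obtain \<xi>' \<eta>' where \<xi>\<eta>': "0 < \<xi>'" "\<xi>' < h" "0 < \<eta>'" "\<eta>' < h"
    "z (w + h *\<^sub>R b + h *\<^sub>R a) - z (w + h *\<^sub>R b) - z (w + h *\<^sub>R a) + z w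
       = h * h * Zyx (w + \<xi>' *\<^sub>R b + \<eta>' *\<^sub>R a)"
    by (rule mixed_difference_mean_value[where z = z and Zx = Zy and Zxy = Zyx and w = w and a = b and b = a,
          OF h])
      (use inW' zy zyx in auto)
  have "h * h * Zxy (w + \<xi> *\<^sub>R a + \<eta> *\<^sub>R b) = h * h * Zyx (w + \<eta>' *\<^sub>R a + \<xi>' *\<^sub>R b)"
    using \<xi>\<eta>(5) \<xi>\<eta>'(5) by (simp add: algebra_simps)
  then have "Zxy (w + \<xi> *\<^sub>R a + \<eta> *\<^sub>R b) = Zyx (w + \<eta>' *\<^sub>R a + \<xi>' *\<^sub>R b)"
    using h by simp
  moreover have "dist (Zxy (w + \<xi> *\<^sub>R a + \<eta> *\<^sub>R b)) (Zxy w) < e"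
    using d2 near \<xi>\<eta> by (simp add: d_def)
  moreover have "dist (Zyx (w + \<eta>' *\<^sub>R a + \<xi>' *\<^sub>R b)) (Zyx w) < e"
    using d3 near \<xi>\<eta>' by (simp add: d_def)
  ultimately show False
    using abs_triangle_ineq[of "Zxy w - Zxy (w + \<xi> *\<^sub>R a + \<eta> *\<^sub>R b)" "Zxy (w + \<xi> *\<^sub>R a + \<eta> *\<^sub>R b) - Zyx w"]
    by (simp add: e_def dist_real_def abs_minus_commute)
qed

lemma matrix_inv_eqI:
  fixes A B :: "'a::comm_semiring_1^'n^'n"
  assumes AB: "A ** B = mat 1" and BA: "B ** A = mat 1"
  shows "matrix_inv A = B"
  unfolding matrix_inv_def
proof (rule some_equality)
  fix B' assume "A ** B' = mat 1 \<and> B' ** A = mat 1"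
  then have "B' = B' ** (A ** B)" "B' ** A = mat 1"
    using AB by (simp_all add: matrix_mul_rid)
  then show "B' = B"
    by (simp add: matrix_mul_assoc matrix_mul_lid)
qed (use assms in simp)

definition scaled_horizontal_metric :: "real \<Rightarrow> real^3^3" where
  "scaled_horizontal_metric a = (\<chi> i j. if i = j then (if i = 3 then 1 else a) else 0)"

lemma scaled_horizontal_metric_component [simp]:
  "scaled_horizontal_metric a $ i $ j = (if i = j then (if i = 3 then 1 else a) else 0)"
  by (simp add: scaled_horizontal_metric_def)

lemma metric_inner_scaled_horizontal:
  "metric_inner (scaled_horizontal_metric a) u v = a * (u $ 1 * v $ 1 + u $ 2 * v $ 2) + u $ 3 * v $ 3"
  by (simp add: metric_inner_def scaled_horizontal_metric_def inner_vec_def matrix_vector_mult_def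
      sum_3 algebra_simps)

lemma matrix_inv_scaled_horizontal:
  assumes "a \<noteq> 0"
  shows "matrix_inv (scaled_horizontal_metric a) = scaled_horizontal_metric (1 / a)"
  using assms
  by (intro matrix_inv_eqI)
    (simp_all add: scaled_horizontal_metric_def vec_eq_iff matrix_matrix_mult_def sum_3 mat_def forall_3)

lemma upward_normal_scaled_horizontal:
  assumes a: "a > 0" and G: "G (X w) = scaled_horizontal_metric a"
    and X1: "pd X w (axis 1 1) = vector [1, 0, p]" and X2: "pd X w (axis 2 1) = vector [0, 1, q]"
  defines "c \<equiv> sqrt (1 + (p\<^sup>2 + q\<^sup>2) / a)"
  shows "upward_normal G X w = vector [- p / (a * c), - q / (a * c), 1 / c]"
proof -
  have c: "c > 0" using a by (simp add: c_def add_pos_nonneg)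
  have c2: "a * c\<^sup>2 = a + p\<^sup>2 + q\<^sup>2"
    using a by (simp add: c_def add_pos_nonneg field_simps)
  have normal_iff: "(N = vector [- p / (a * c), - q / (a * c), 1 / c]) \<longleftrightarrow>
      a * N $ 1 + p * N $ 3 = 0 \<and> a * N $ 2 + q * N $ 3 = 0 \<and>
      a * ((N $ 1)\<^sup>2 + (N $ 2)\<^sup>2) + (N $ 3)\<^sup>2 = 1 \<and> N $ 3 > 0" for N :: "real^3"
  proof
    have "a * ((p / (a * c))\<^sup>2 + (q / (a * c))\<^sup>2) + (1 / c)\<^sup>2 = (a + p\<^sup>2 + q\<^sup>2) / (a * c\<^sup>2)"
      using a c by (simp add: field_simps power2_eq_square)
    then have unit: "a * ((p / (a * c))\<^sup>2 + (q / (a * c))\<^sup>2) + (1 / c)\<^sup>2 = 1"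
      using a c2 by (simp add: add_pos_nonneg less_imp_neq[symmetric])
    assume "N = vector [- p / (a * c), - q / (a * c), 1 / c]"
    then show "a * N $ 1 + p * N $ 3 = 0 \<and> a * N $ 2 + q * N $ 3 = 0 \<and>
      a * ((N $ 1)\<^sup>2 + (N $ 2)\<^sup>2) + (N $ 3)\<^sup>2 = 1 \<and> N $ 3 > 0"
      using a c unit by simp
  next
    assume eqs: "a * N $ 1 + p * N $ 3 = 0 \<and> a * N $ 2 + q * N $ 3 = 0 \<and>
      a * ((N $ 1)\<^sup>2 + (N $ 2)\<^sup>2) + (N $ 3)\<^sup>2 = 1 \<and> N $ 3 > 0"
    then have n1: "N $ 1 = - p * N $ 3 / a" and n2: "N $ 2 = - q * N $ 3 / a"
      using a by (simp_all add: field_simps)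
    have "a * ((N $ 3)\<^sup>2 * (a * c\<^sup>2)) = a * a"
      using eqs a unfolding n1 n2 c2 by (simp add: field_simps power2_eq_square)
    then have "(N $ 3 * c)\<^sup>2 = 1\<^sup>2"
      using a by (simp add: power_mult_distrib)
    then have "N $ 3 * c = 1"
      using eqs c power2_eq_iff_nonneg[of "N $ 3 * c" 1] by simp
    then have "N $ 3 = 1 / c"
      using c by (simp add: field_simps)
    then show "N = vector [- p / (a * c), - q / (a * c), 1 / c]"
      by (simp add: vec_eq_iff forall_3 n1 n2 field_simps)
  qed
  have "metric_inner (scaled_horizontal_metric a) N (vector [1, 0, p]) = 0 \<and>
      metric_inner (scaled_horizontal_metric a) N (vector [0, 1, q]) = 0 \<and>
      metric_inner (scaled_horizontal_metric a) N N = 1 \<and> N $ 3 > 0 \<longleftrightarrow>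
      N = vector [- p / (a * c), - q / (a * c), 1 / c]" for N
    unfolding normal_iff metric_inner_scaled_horizontal by (simp add: algebra_simps power2_eq_square)
  then show ?thesis
    unfolding upward_normal_def G X1 X2 by simp
qed

lemma extrinsic_curvature_scaled_horizontal:
  fixes G :: "real^3 \<Rightarrow> real^3^3" and X :: "real^2 \<Rightarrow> real^3"
  assumes F: "F > 0" and l: "l > 0"
    and G: "G (X w) = scaled_horizontal_metric (F * l)"
    and DG: "\<And>i j m. pd (\<lambda>v. G v $ j $ m) (X w) (axis i 1) =
      (if j = m \<and> j \<noteq> 3 then (if i = 1 then F * Lx else if i = 2 then F * Ly else F' * l) else 0)"
    and X1: "pd X w (axis 1 1) = vector [1, 0, p]" and X2: "pd X w (axis 2 1) = vector [0, 1, q]"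
    and X11: "pd (\<lambda>w'. pd X w' (axis 1 1)) w (axis 1 1) = vector [0, 0, r]"
    and X12: "pd (\<lambda>w'. pd X w' (axis 2 1)) w (axis 1 1) = vector [0, 0, s]"
    and X21: "pd (\<lambda>w'. pd X w' (axis 1 1)) w (axis 2 1) = vector [0, 0, s]"
    and X22: "pd (\<lambda>w'. pd X w' (axis 2 1)) w (axis 2 1) = vector [0, 0, t]"
  shows "extrinsic_curvature G X w =
     ((r + (- p * Lx / (2 * l) + q * Ly / (2 * l) - p\<^sup>2 * F' / F - F' / 2 * l)) *
      (t + (p * Lx / (2 * l) - q * Ly / (2 * l) - q\<^sup>2 * F' / F - F' / 2 * l)) -
      (s - (p * Ly / (2 * l) + q * Lx / (2 * l) + p * q * F' / F))\<^sup>2) / (F * l + p\<^sup>2 + q\<^sup>2)\<^sup>2"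
proof -
  have a: "F * l > 0" using F l by simp
  define c where "c = sqrt (1 + (p\<^sup>2 + q\<^sup>2) / (F * l))"
  have c: "c > 0" unfolding c_def using a by (simp add: add_pos_nonneg)
  have c2: "c\<^sup>2 = (F * l + p\<^sup>2 + q\<^sup>2) / (F * l)"
    unfolding c_def using F l by (simp add: add_pos_nonneg add_divide_distrib)
  have N: "upward_normal G X w = vector [- p / (F * l * c), - q / (F * l * c), 1 / c]"
    unfolding c_def by (rule upward_normal_scaled_horizontal[where G = G and X = X, OF a G X1 X2])
  have Ginv: "matrix_inv (scaled_horizontal_metric (F * l)) = scaled_horizontal_metric (1 / (F * l))"
    using F l by (intro matrix_inv_scaled_horizontal) simp
  let ?A = "p * Lx / (2 * l) - q * Ly / (2 * l) - q\<^sup>2 * F' / F - F' / 2 * l"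
  let ?B = "p * Ly / (2 * l) + q * Lx / (2 * l) + p * q * F' / F"
  let ?C = "- p * Lx / (2 * l) + q * Ly / (2 * l) - p\<^sup>2 * F' / F - F' / 2 * l"
  note defs = second_ff_def covd_tangent_def christoffel_def metric_inner_scaled_horizontal
    N X1 X2 X11 X12 X21 X22 DG G Ginv sum_3
  have II: "second_ff G X w $ 1 $ 1 = (r + ?C) / c" "second_ff G X w $ 2 $ 2 = (t + ?A) / c"
    "second_ff G X w $ 1 $ 2 = (s - ?B) / c" "second_ff G X w $ 2 $ 1 = (s - ?B) / c"
    by (simp_all add: defs) (use F l c in \<open>simp_all add: field_simps power2_eq_square\<close>)
  have I: "det (first_ff G X w) = F * l * (F * l + p\<^sup>2 + q\<^sup>2)"
    by (simp add: first_ff_def det_2 G X1 X2 metric_inner_scaled_horizontal algebra_simps power2_eq_square)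
  have det_II: "x / c * (y / c) - u / c * (u / c) = (x * y - u\<^sup>2) / c\<^sup>2" for x y u :: real
    by (simp add: power2_eq_square diff_divide_distrib)
  have "extrinsic_curvature G X w = ((r + ?C) * (t + ?A) - (s - ?B)\<^sup>2) / (c\<^sup>2 * (F * l * (F * l + p\<^sup>2 + q\<^sup>2)))"
    unfolding extrinsic_curvature_def I det_2[of "second_ff G X w"] II det_II by simp
  also have "c\<^sup>2 * (F * l * (F * l + p\<^sup>2 + q\<^sup>2)) = (F * l + p\<^sup>2 + q\<^sup>2)\<^sup>2"
    using F l unfolding c2 by (simp add: power2_eq_square)
  finally show ?thesis .
qed

lemma pd_graph_map:
  assumes "((\<lambda>h. z (u + h *\<^sub>R v)) has_real_derivative D) (at 0)"
  shows "pd (graph_map z) u v = vector [v $ 1, v $ 2, D]"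
  unfolding pd_def graph_map_def
  by (intro vector_derivative_at has_vector_derivative_vector3 has_real_derivative_line_component assms)

lemma pd_pd_graph_map:
  assumes W: "open W" and w: "w \<in> W"
    and z: "\<And>u. u \<in> W \<Longrightarrow> ((\<lambda>h. z (u + h *\<^sub>R vj)) has_real_derivative pd z u vj) (at 0)"
    and D: "((\<lambda>h. pd z (w + h *\<^sub>R vi) vj) has_real_derivative D) (at 0)"
  shows "pd (\<lambda>w'. pd (graph_map z) w' vj) w vi = vector [0, 0, D]"
proof -
  let ?S = "(\<lambda>h. w + h *\<^sub>R vi) -` W"
  have S: "open ?S" "0 \<in> ?S"
    using w by (auto intro!: continuous_open_vimage W continuous_intros)
  have "((\<lambda>h. vector [vj $ 1, vj $ 2, pd z (w + h *\<^sub>R vi) vj] :: real^3) has_vector_derivative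
      vector [0, 0, D]) (at 0)"
    by (intro has_vector_derivative_vector3 DERIV_const D)
  then have "((\<lambda>h. pd (graph_map z) (w + h *\<^sub>R vi) vj) has_vector_derivative vector [0, 0, D]) (at 0)"
    by (rule has_vector_derivative_transform_within_open[OF _ S]) (simp add: pd_graph_map[OF z])
  then show ?thesis
    unfolding pd_def[of "\<lambda>w'. pd (graph_map z) w' vj"] by (rule vector_derivative_at)
qed

lemma vector_components_2: "vector [u $ 1, u $ 2] = (u :: 'a::zero^2)"
  by (simp add: vec_eq_iff forall_2)

lemma warped_metric_vector:
  "warped_metric lam f (vector [x, y, t]) $ j $ m =
    (if j = m then (if j = 3 then 1 else f t * lam (vector [x, y])) else 0)"
  by (simp add: warped_metric_def)

lemma warped_metric_graph_map:
  "warped_metric lam f (graph_map z w) = scaled_horizontal_metric (f (z w) * lam w)"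
  by (simp add: vec_eq_iff graph_map_def warped_metric_vector vector_components_2)

lemma pd_warped_metric_graph_map:
  assumes lx: "((\<lambda>h. lam (w + h *\<^sub>R axis 1 1)) has_real_derivative Lx) (at 0)"
    and ly: "((\<lambda>h. lam (w + h *\<^sub>R axis 2 1)) has_real_derivative Ly) (at 0)"
    and f: "(f has_real_derivative F') (at (z w))"
  shows "pd (\<lambda>v. warped_metric lam f v $ j $ m) (graph_map z w) (axis i 1) =
    (if j = m \<and> j \<noteq> 3 then (if i = 1 then f (z w) * Lx else if i = 2 then f (z w) * Ly else F' * lam w)
     else 0)"
proof (cases "j = m \<and> j \<noteq> 3")
  case False
  then have "(\<lambda>h. warped_metric lam f (graph_map z w + h *\<^sub>R axis i 1) $ j $ m) = (\<lambda>h. if j = m then 1 else 0)"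
    by (auto simp: warped_metric_def)
  with False show ?thesis
    by (auto simp: pd_def intro!: vector_derivative_at)
next
  case True
  then have jm: "j = m" "m \<noteq> 3" by auto
  let ?entry = "\<lambda>h. warped_metric lam f (graph_map z w + h *\<^sub>R axis i 1) $ j $ m"
  have "(?entry has_real_derivative
      (if i = 1 then f (z w) * Lx else if i = 2 then f (z w) * Ly else F' * lam w)) (at 0)"
  proof -
    consider "i = 1" | "i = 2" | "i = 3" using exhaust_3 by blast
    then show ?thesis
    proof cases
      case 1
      then have line: "graph_map z w + h *\<^sub>R axis i 1 =
          vector [(w + h *\<^sub>R axis 1 1) $ 1, (w + h *\<^sub>R axis 1 1) $ 2, z w]" for h
        by (simp add: graph_map_def vec_eq_iff forall_3 axis_def)
      have "?entry = (\<lambda>h. f (z w) * lam (w + h *\<^sub>R axis 1 1))"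
        unfolding line warped_metric_vector vector_components_2 using jm by simp
      then show ?thesis using 1 lx by (simp add: DERIV_cmult)
    next
      case 2
      then have line: "graph_map z w + h *\<^sub>R axis i 1 =
          vector [(w + h *\<^sub>R axis 2 1) $ 1, (w + h *\<^sub>R axis 2 1) $ 2, z w]" for h
        by (simp add: graph_map_def vec_eq_iff forall_3 axis_def)
      have "?entry = (\<lambda>h. f (z w) * lam (w + h *\<^sub>R axis 2 1))"
        unfolding line warped_metric_vector vector_components_2 using jm by simp
      then show ?thesis using 2 ly by (simp add: DERIV_cmult)
    next
      case 3
      then have line: "graph_map z w + h *\<^sub>R axis i 1 = vector [w $ 1, w $ 2, z w + h]" for h
        by (simp add: graph_map_def vec_eq_iff forall_3 axis_def)
      have "?entry = (\<lambda>h. f (z w + h) * lam w)"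
        unfolding line warped_metric_vector vector_components_2 using jm by simp
      moreover have "((\<lambda>h. f (z w + h)) has_real_derivative F') (at 0)"
        using f DERIV_shift[of f F' 0 "z w"] by (simp add: add.commute)
      ultimately show ?thesis using 3 by (simp add: DERIV_cmult_right)
    qed
  qed
  then show ?thesis
    using jm unfolding pd_def
    by (simp add: vector_derivative_at has_real_derivative_iff_has_vector_derivative)
qed

lemma extrinsic_curvature_warped_graph:
  assumes W: "open W" and w: "w \<in> W" and l: "lam w > 0" and F: "f (z w) > 0" and z: "Ck_on 2 W z"
    and lx: "((\<lambda>h. lam (w + h *\<^sub>R axis 1 1)) has_real_derivative pd lam w (axis 1 1)) (at 0)"
    and ly: "((\<lambda>h. lam (w + h *\<^sub>R axis 2 1)) has_real_derivative pd lam w (axis 2 1)) (at 0)"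
    and f: "(f has_real_derivative deriv f (z w)) (at (z w))"
  defines "p \<equiv> pd z w (axis 1 1)" and "q \<equiv> pd z w (axis 2 1)"
    and "r \<equiv> pd (\<lambda>w'. pd z w' (axis 1 1)) w (axis 1 1)"
    and "s \<equiv> pd (\<lambda>w'. pd z w' (axis 2 1)) w (axis 1 1)"
    and "t \<equiv> pd (\<lambda>w'. pd z w' (axis 2 1)) w (axis 2 1)"
    and "Lx \<equiv> pd lam w (axis 1 1)" and "Ly \<equiv> pd lam w (axis 2 1)"
    and "F' \<equiv> deriv f (z w)"
  shows "extrinsic_curvature (warped_metric lam f) (graph_map z) w =
     ((r + (- p * Lx / (2 * lam w) + q * Ly / (2 * lam w) - p\<^sup>2 * F' / f (z w) - F' / 2 * lam w)) *
      (t + (p * Lx / (2 * lam w) - q * Ly / (2 * lam w) - q\<^sup>2 * F' / f (z w) - F' / 2 * lam w)) -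
      (s - (p * Ly / (2 * lam w) + q * Lx / (2 * lam w) + p * q * F' / f (z w)))\<^sup>2) /
     (f (z w) * lam w + p\<^sup>2 + q\<^sup>2)\<^sup>2"
proof -
  have zd: "((\<lambda>h. z (u + h *\<^sub>R v)) has_real_derivative pd z u v) (at 0)"
    if "u \<in> W" "v \<in> Basis" for u v
    using Ck_on_has_real_derivative_iter_pd[OF z, of "[]"] that by simp
  have zdd: "((\<lambda>h. pd z (u + h *\<^sub>R v) v') has_real_derivative pd (\<lambda>u. pd z u v') u v) (at 0)"
    if "u \<in> W" "v \<in> Basis" "v' \<in> Basis" for u v v'
    using Ck_on_has_real_derivative_iter_pd[OF z, of "[v']"] that by simp
  have zc: "continuous_on W (\<lambda>u. pd (\<lambda>u. pd z u v') u v)" if "v \<in> Basis" "v' \<in> Basis" for v v'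
    using Ck_on_continuous_on_iter_pd[OF z, of "[v, v']"] that by simp
  have b: "axis 1 1 \<in> (Basis :: (real^2) set)" "axis 2 1 \<in> (Basis :: (real^2) set)"
    by simp_all
  have s_sym: "pd (\<lambda>w'. pd z w' (axis 1 1)) w (axis 2 1) = s"
    unfolding s_def
    by (rule partial_derivatives_commute[OF W w zd[OF _ b(1)] zd[OF _ b(2)] zdd[OF _ b(2,1)]
          zdd[OF _ b(1,2)] zc[OF b(2,1)] zc[OF b(1,2)]])
  show ?thesis
  proof (rule extrinsic_curvature_scaled_horizontal[OF F l])
    show "warped_metric lam f (graph_map z w) = scaled_horizontal_metric (f (z w) * lam w)"
      by (rule warped_metric_graph_map)
    show "pd (\<lambda>v. warped_metric lam f v $ j $ m) (graph_map z w) (axis i 1) =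
      (if j = m \<and> j \<noteq> 3 then if i = 1 then f (z w) * Lx else if i = 2 then f (z w) * Ly else F' * lam w
       else 0)" for i j m
      unfolding Lx_def Ly_def F'_def by (rule pd_warped_metric_graph_map[where z = z, OF lx ly f])
    show "pd (graph_map z) w (axis 1 1) = vector [1, 0, p]" "pd (graph_map z) w (axis 2 1) = vector [0, 1, q]"
      using pd_graph_map[OF zd[OF w b(1)]] pd_graph_map[OF zd[OF w b(2)]]
      by (simp_all add: p_def q_def axis_def)
    have X2: "pd (\<lambda>w'. pd (graph_map z) w' vj) w vi = vector [0, 0, pd (\<lambda>u. pd z u vj) w vi]"
      if "vi \<in> Basis" "vj \<in> Basis" for vi vj
      using that by (intro pd_pd_graph_map[OF W w zd zdd[OF w]])
    show "pd (\<lambda>w'. pd (graph_map z) w' (axis 1 1)) w (axis 1 1) = vector [0, 0, r]"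
      "pd (\<lambda>w'. pd (graph_map z) w' (axis 2 1)) w (axis 1 1) = vector [0, 0, s]"
      "pd (\<lambda>w'. pd (graph_map z) w' (axis 1 1)) w (axis 2 1) = vector [0, 0, s]"
      "pd (\<lambda>w'. pd (graph_map z) w' (axis 2 1)) w (axis 2 1) = vector [0, 0, t]"
      using X2[OF b(1) b(1)] X2[OF b(1) b(2)] X2[OF b(2) b(1)] X2[OF b(2) b(2)] s_sym
      by (simp_all add: r_def s_def t_def)
  qed
qed

lemma quotient_eq_iff_Monge_Ampere:
  fixes A B C D K r s t :: real
  assumes "D \<noteq> 0"
  shows "((r + C) * (t + A) - (s - B)\<^sup>2) / D = K \<longleftrightarrow>
    A * r + 2 * B * s + C * t + r * t - s\<^sup>2 = K * D - A * C + B\<^sup>2"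
proof -
  have "((r + C) * (t + A) - (s - B)\<^sup>2) / D = K \<longleftrightarrow> (r + C) * (t + A) - (s - B)\<^sup>2 = K * D"
    using assms by (simp add: divide_eq_eq)
  also have "\<dots> \<longleftrightarrow> A * r + 2 * B * s + C * t + r * t - s\<^sup>2 = K * D - A * C + B\<^sup>2"
    by (simp add: algebra_simps power2_eq_square)
  finally show ?thesis .
qed

theorem mainTheorem13:
  fixes W :: "(real^2) set" and lam :: "real^2 \<Rightarrow> real" and f :: "real \<Rightarrow> real"
    and z :: "real^2 \<Rightarrow> real" and K :: "real^2 \<Rightarrow> real"
  assumes "open W"
    and "\<forall>w\<in>W. lam w > 0"
    and "smooth_on W lam"
    and "\<forall>x. f x > 0"
    and "smooth_on UNIV f"
    and "Ck_on 2 W z"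
  shows "(\<forall>w\<in>W. extrinsic_curvature (warped_metric lam f) (graph_map z) w = K w)
     \<longleftrightarrow>
     (\<forall>w\<in>W.
        let ex = axis (1::2) (1::real); ey = axis (2::2) (1::real);
            p = pd z w ex; q = pd z w ey;
            r = pd (\<lambda>w'. pd z w' ex) w ex; s = pd (\<lambda>w'. pd z w' ey) w ex;
            t = pd (\<lambda>w'. pd z w' ey) w ey;
            l = lam w; lx = pd lam w ex; ly = pd lam w ey;
            fz = f (z w); f' = deriv f (z w);
            A = p * lx / (2 * l) - q * ly / (2 * l) - q\<^sup>2 * f' / fz - f' / 2 * l;
            B = p * ly / (2 * l) + q * lx / (2 * l) + p * q * f' / fz;
            C = - p * lx / (2 * l) + q * ly / (2 * l) - p\<^sup>2 * f' / fz - f' / 2 * l;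
            E = K w * (fz * l + p\<^sup>2 + q\<^sup>2)\<^sup>2 - A * C + B\<^sup>2
        in A * r + 2 * B * s + C * t + r * t - s\<^sup>2 = E)"
proof -
  have lam: "((\<lambda>h. lam (w + h *\<^sub>R v)) has_real_derivative pd lam w v) (at 0)"
    if "w \<in> W" "v \<in> Basis" for w v
    using Ck_on_has_real_derivative_iter_pd[of 1 W lam "[]"] assms(3) that by (simp add: smooth_on_def)
  have f: "(f has_real_derivative deriv f x) (at x)" for x
    by (rule smooth_on_UNIV_has_real_derivative[OF assms(5)])
  have lam_pos: "lam w > 0" if "w \<in> W" for w
    using assms(2) that by blast
  have denominator_nonzero: "(f (z w) * lam w + (pd z w (axis 1 1))\<^sup>2 + (pd z w (axis 2 1))\<^sup>2)\<^sup>2 \<noteq> 0"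
    if "w \<in> W" for w
  proof -
    have "f (z w) * lam w + (pd z w (axis 1 1))\<^sup>2 + (pd z w (axis 2 1))\<^sup>2 > 0"
      using assms(2,4) that by (intro add_pos_nonneg) auto
    then show ?thesis by simp
  qed
  have b: "axis 1 1 \<in> (Basis :: (real^2) set)" "axis 2 1 \<in> (Basis :: (real^2) set)"
    by simp_all
  note K_ext = extrinsic_curvature_warped_graph
    [OF assms(1) _ lam_pos assms(4)[rule_format] assms(6) lam[OF _ b(1)] lam[OF _ b(2)] f]
  show ?thesis
    unfolding Let_def
    by (intro ball_cong refl)
      (simp only: K_ext quotient_eq_iff_Monge_Ampere[OF denominator_nonzero])
qed

end
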